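(* Let $G$ be a connected Lie group with identity $e$ and consider a discrete-time linear control system on $G$ with control range $U\subset\mathbb{R}^m$ a compact neighborhood of $0$. Let $H$ be a connected Lie subgroup of $G$ and suppose there is a neighborhood $B$ of $e$ in $H$ with $B\subset H\cap\mathcal{R}$ which is invariant under $f_0$ and $f_0^{-1}$. Then $H$ is $f_0$-invariant and $H\subset\mathcal{R}$.
   Context: A discrete-time linear control system on $G$ is given by $f:G\times U\to G$, $f_u:=f(\cdot,u)$, such that $f_0$ is an automorphism of $G$ and $f_u(g)=f_u(e)f_0(g)$ for all $g\in G,u\in U$. Solutions: $\varphi(0,g,u)=g$, $\varphi(k,g,u)=f_{u_{k-1}}\circ\cdots\circ f_{u_0}(g)$ for $u=(u_i)\in U^{\mathbb{N}_0}$; $\mathcal{R}=\bigcup_{k\in\mathbb{N}}\{\varphi(k,e,u)\}$. A set $S$ is invariant under a map $\psi$ if $\psi(S)\subset S$. *)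

theory Defs
  imports "HOL-Analysis.Analysis" "HOL-Algebra.Group"
begin

text \<open>By Gleason--Montgomery--Zippin such a group carries a
  unique compatible smooth (even analytic) Lie group structure.\<close>
definition lie_group :: "('g, 'b) monoid_scheme \<Rightarrow> 'g topology \<Rightarrow> bool" where
  "lie_group G T \<longleftrightarrow>
     group G \<and> topspace T = carrier G \<and> Hausdorff_space T \<and>
     continuous_map (prod_topology T T) T (\<lambda>(x, y). x \<otimes>\<^bsub>G\<^esub> y) \<and>
     continuous_map T T (\<lambda>x. inv\<^bsub>G\<^esub> x) \<and>
     (\<exists>n. \<forall>x\<in>topspace T. \<exists>W. openin T W \<and> x \<in> W \<and>
        (\<exists>V. openin (Euclidean_space n) V \<and>
              subtopology T W homeomorphic_space subtopology (Euclidean_space n) V))"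

text \<open>A Lie subgroup of (G,T): a subgroup H with its own Lie group topology TH
  such that the inclusion H \<rightarrow> G is continuous (hence an injective immersion).\<close>
definition lie_subgroup ::
  "'g set \<Rightarrow> 'g topology \<Rightarrow> ('g, 'b) monoid_scheme \<Rightarrow> 'g topology \<Rightarrow> bool" where
  "lie_subgroup H TH G T \<longleftrightarrow>
     subgroup H G \<and> lie_group (G\<lparr>carrier := H\<rparr>) TH \<and> continuous_map TH T (\<lambda>x. x)"

definition linear_control_system ::
  "('g, 'b) monoid_scheme \<Rightarrow> 'g topology \<Rightarrow> 'u set \<Rightarrow> ('g \<Rightarrow> 'u::zero \<Rightarrow> 'g) \<Rightarrow> bool" where
  "linear_control_system G T U f \<longleftrightarrow>
     0 \<in> U \<and>
     (\<forall>g\<in>carrier G. \<forall>u\<in>U. f g u \<in> carrier G) \<and>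
     (\<lambda>g. f g 0) \<in> hom G G \<and> bij_betw (\<lambda>g. f g 0) (carrier G) (carrier G) \<and>
     homeomorphic_map T T (\<lambda>g. f g 0) \<and>
     (\<forall>g\<in>carrier G. \<forall>u\<in>U. f g u = f (\<one>\<^bsub>G\<^esub>) u \<otimes>\<^bsub>G\<^esub> f g 0)"

primrec phi :: "('g \<Rightarrow> 'u \<Rightarrow> 'g) \<Rightarrow> nat \<Rightarrow> 'g \<Rightarrow> (nat \<Rightarrow> 'u) \<Rightarrow> 'g" where
  "phi f 0 g u = g"
| "phi f (Suc k) g u = f (phi f k g u) (u k)"

definition reachable :: "('g, 'b) monoid_scheme \<Rightarrow> 'u set \<Rightarrow> ('g \<Rightarrow> 'u \<Rightarrow> 'g) \<Rightarrow> 'g set" where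
  "reachable G U f = {phi f k (\<one>\<^bsub>G\<^esub>) u | k u. k \<ge> 1 \<and> (\<forall>i. u i \<in> U)}"

end

theory Submission
  imports Defs
begin

text \<open>Because \<open>H\<close> is connected, an open neighbourhood \<open>V \<subseteq> B\<close> of \<open>e\<close> generates \<open>H\<close> even as
  a semigroup: the set of finite products of elements of \<open>V\<close> is open and closed in \<open>H\<close>.
  It therefore suffices that \<open>f\<^sub>0 x \<in> H\<close> and \<open>x \<in> \<R>\<close> are preserved under right multiplication
  by elements of \<open>V\<close>. For \<open>f\<^sub>0\<close> this is multiplicativity. For \<open>\<R>\<close> it is the identity
  \<open>\<phi>(k + l, e, u v) = \<phi>(l, e, v) f\<^sub>0\<^sup>l(\<phi>(k, e, u))\<close> for concatenated controls: given
  \<open>x = \<phi>(l, e, v) \<in> \<R>\<close> and \<open>b \<in> B\<close>, the point \<open>f\<^sub>0\<^sup>-\<^sup>l(b)\<close> lies in \<open>B \<subseteq> \<R>\<close> by invariance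
  under \<open>f\<^sub>0\<^sup>-\<^sup>1\<close>, so \<open>x b \<in> \<R>\<close>.\<close>

inductive_set semigroup_generate :: "('a, 'c) monoid_scheme \<Rightarrow> 'a set \<Rightarrow> 'a set"
  for K V where
  incl: "v \<in> V \<Longrightarrow> v \<in> semigroup_generate K V"
| mult: "s \<in> semigroup_generate K V \<Longrightarrow> v \<in> V \<Longrightarrow> s \<otimes>\<^bsub>K\<^esub> v \<in> semigroup_generate K V"

lemma semigroup_generate_minimal:
  assumes "V \<subseteq> S" and "\<And>s v. s \<in> S \<Longrightarrow> v \<in> V \<Longrightarrow> s \<otimes>\<^bsub>K\<^esub> v \<in> S"
  shows "semigroup_generate K V \<subseteq> S"
proof
  fix x assume "x \<in> semigroup_generate K V"
  then show "x \<in> S" by induction (use assms in auto)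
qed

lemma (in group) hom_image_semigroup_generate_subset:
  assumes h: "h \<in> hom G K" and H: "subgroup H K" and V: "V \<subseteq> carrier G" "h ` V \<subseteq> H"
  shows "h ` semigroup_generate G V \<subseteq> H"
proof -
  have "semigroup_generate G V \<subseteq> {x \<in> carrier G. h x \<in> H}"
  proof (rule semigroup_generate_minimal)
    fix s v assume s: "s \<in> {x \<in> carrier G. h x \<in> H}" and v: "v \<in> V"
    then have "h (s \<otimes> v) = h s \<otimes>\<^bsub>K\<^esub> h v"
      using V(1) by (auto intro: hom_mult[OF h])
    then show "s \<otimes> v \<in> {x \<in> carrier G. h x \<in> H}"
      using s v V by (auto intro: subgroup.m_closed[OF H])
  qed (use V in auto)
  then show ?thesis by blast
qed

lemma semigroup_generate_carrier_update:
  "semigroup_generate (K\<lparr>carrier := H\<rparr>) V = semigroup_generate K V"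
proof (rule antisym; rule semigroup_generate_minimal)
  show "s \<otimes>\<^bsub>K\<lparr>carrier := H\<rparr>\<^esub> v \<in> semigroup_generate K V"
    if "s \<in> semigroup_generate K V" "v \<in> V" for s v
    using that by (simp add: semigroup_generate.mult)
  show "s \<otimes>\<^bsub>K\<^esub> v \<in> semigroup_generate (K\<lparr>carrier := H\<rparr>) V"
    if "s \<in> semigroup_generate (K\<lparr>carrier := H\<rparr>) V" "v \<in> V" for s v
    using semigroup_generate.mult[OF that] by simp
qed (auto intro: semigroup_generate.incl)

definition topological_group :: "('g, 'b) monoid_scheme \<Rightarrow> 'g topology \<Rightarrow> bool" where
  "topological_group K X \<longleftrightarrow>
     group K \<and> topspace X = carrier K \<and>
     continuous_map (prod_topology X X) X (\<lambda>(x, y). x \<otimes>\<^bsub>K\<^esub> y) \<and>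
     continuous_map X X (\<lambda>x. inv\<^bsub>K\<^esub> x)"

lemma lie_group_imp_topological_group: "lie_group K X \<Longrightarrow> topological_group K X"
  by (simp add: lie_group_def topological_group_def)

lemma topological_group_topspace: "topological_group K X \<Longrightarrow> topspace X = carrier K"
  by (simp add: topological_group_def)

lemma continuous_map_group_mult:
  assumes "topological_group K X"
    and "continuous_map X X p" and "continuous_map X X q"
  shows "continuous_map X X (\<lambda>y. p y \<otimes>\<^bsub>K\<^esub> q y)"
proof -
  have "continuous_map X (prod_topology X X) (\<lambda>y. (p y, q y))"
    using assms(2,3) by (rule continuous_map_pairedI)
  moreover have "continuous_map (prod_topology X X) X (\<lambda>(x, y). x \<otimes>\<^bsub>K\<^esub> y)"
    using assms(1) by (simp add: topological_group_def)
  ultimately show ?thesis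
    using continuous_map_compose by (fastforce simp: o_def)
qed

lemma continuous_map_group_inv:
  "topological_group K X \<Longrightarrow> continuous_map X X p \<Longrightarrow> continuous_map X X (\<lambda>y. inv\<^bsub>K\<^esub> p y)"
  using continuous_map_compose[of X X p X "\<lambda>x. inv\<^bsub>K\<^esub> x"]
  by (simp add: topological_group_def o_def)

lemma continuous_map_group_const:
  "topological_group K X \<Longrightarrow> a \<in> carrier K \<Longrightarrow> continuous_map X X (\<lambda>y. a)"
  by (simp add: topological_group_def)

context
  fixes K (structure) and X V
  assumes top: "topological_group K X" and V: "openin X V" "\<one> \<in> V"
begin

interpretation group K
  using top by (simp add: topological_group_def)

lemma topspace_eq_carrier: "topspace X = carrier K"
  using top by (rule topological_group_topspace)

lemma semigroup_generate_subset_carrier: "semigroup_generate K V \<subseteq> carrier K"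
  using openin_subset[OF V(1)] topspace_eq_carrier
  by (intro semigroup_generate_minimal) auto

text \<open>A generated element \<open>s\<close> has the neighbourhood \<open>s V\<close> of generated elements.\<close>
lemma openin_semigroup_generate: "openin X (semigroup_generate K V)"
proof (subst openin_subopen, intro ballI)
  fix s assume s: "s \<in> semigroup_generate K V"
  then have s_carrier: "s \<in> carrier K"
    using semigroup_generate_subset_carrier by auto
  let ?N = "{y \<in> topspace X. inv s \<otimes> y \<in> V}"
  have "openin X ?N"
    using s_carrier top
    by (intro openin_continuous_map_preimage[OF _ V(1)] continuous_map_group_mult
        continuous_map_group_const) (auto simp: topological_group_def)
  moreover have "s \<in> ?N"
    using s_carrier V(2) topspace_eq_carrier by auto
  moreover have "?N \<subseteq> semigroup_generate K V"
  proof
    fix y assume y: "y \<in> ?N"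
    then have "s \<otimes> (inv s \<otimes> y) \<in> semigroup_generate K V"
      using s by (auto intro: semigroup_generate.mult)
    then show "y \<in> semigroup_generate K V"
      using s_carrier y topspace_eq_carrier by (simp add: m_assoc[symmetric])
  qed
  ultimately show "\<exists>N. openin X N \<and> s \<in> N \<and> N \<subseteq> semigroup_generate K V"
    by blast
qed

text \<open>If \<open>x\<close> is not generated, neither is any \<open>y\<close> with \<open>y\<^sup>-\<^sup>1 x \<in> V\<close>, since \<open>x = y (y\<^sup>-\<^sup>1 x)\<close>.\<close>
lemma closedin_semigroup_generate: "closedin X (semigroup_generate K V)"
proof -
  have "openin X (topspace X - semigroup_generate K V)"
  proof (subst openin_subopen, intro ballI)
    fix x assume x: "x \<in> topspace X - semigroup_generate K V"
    then have x_carrier: "x \<in> carrier K"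
      using topspace_eq_carrier by auto
    let ?N = "{y \<in> topspace X. inv y \<otimes> x \<in> V}"
    have "openin X ?N"
      using x_carrier top
      by (intro openin_continuous_map_preimage[OF _ V(1)] continuous_map_group_mult
          continuous_map_group_inv continuous_map_group_const) auto
    moreover have "x \<in> ?N"
      using x_carrier V(2) x by auto
    moreover have "?N \<subseteq> topspace X - semigroup_generate K V"
    proof (intro subsetI DiffI)
      fix y assume y: "y \<in> ?N"
      then show "y \<in> topspace X" by simp
      show "y \<notin> semigroup_generate K V"
      proof
        assume "y \<in> semigroup_generate K V"
        then have "y \<otimes> (inv y \<otimes> x) \<in> semigroup_generate K V"
          using y by (auto intro: semigroup_generate.mult)
        then show False
          using x x_carrier y topspace_eq_carrier by (simp add: m_assoc[symmetric])
      qed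
    qed
    ultimately show "\<exists>N. openin X N \<and> x \<in> N \<and> N \<subseteq> topspace X - semigroup_generate K V"
      by blast
  qed
  then show ?thesis
    using semigroup_generate_subset_carrier topspace_eq_carrier by (simp add: closedin_def)
qed

lemma connected_semigroup_generate_eq_carrier:
  assumes "connected_space X"
  shows "semigroup_generate K V = carrier K"
proof -
  have "semigroup_generate K V \<noteq> {}"
    using V(2) by (auto intro: semigroup_generate.incl)
  moreover have "semigroup_generate K V = {} \<or> semigroup_generate K V = topspace X"
    using assms openin_semigroup_generate closedin_semigroup_generate
    unfolding connected_space_clopen_in by simp
  ultimately show ?thesis
    using topspace_eq_carrier by simp
qed

end

lemma phi_add: "phi f (k + l) g u = phi f l (phi f k g u) (\<lambda>i. u (k + i))"
  by (induction l) auto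

lemma phi_cong: "(\<And>i. i < k \<Longrightarrow> u i = w i) \<Longrightarrow> phi f k g u = phi f k g w"
  by (induction k) auto

lemma funpow_inv_into_right_inverse:
  assumes "bij_betw F A A" and "x \<in> A"
  shows "(F ^^ l) ((inv_into A F ^^ l) x) = x"
  using assms(2)
proof (induction l arbitrary: x)
  case (Suc l)
  have "inv_into A F x \<in> A"
    using bij_betw_apply[OF bij_betw_inv_into[OF assms(1)] Suc.prems] .
  moreover have "F (inv_into A F x) = x"
    using Suc.prems bij_betw_imp_surj_on[OF assms(1)] by (simp add: f_inv_into_f)
  moreover have "(inv_into A F ^^ Suc l) x = (inv_into A F ^^ l) (inv_into A F x)"
    by (simp add: funpow_Suc_right del: funpow.simps)
  ultimately show ?case
    using Suc.IH by (metis funpow.simps(2) o_apply)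
qed simp

context
  fixes G (structure) and T U f
  assumes lcs: "linear_control_system G T U f" and grp: "group G"
begin

interpretation group G by (rule grp)

lemma linear_control_system_zero_mem: "0 \<in> U"
  and linear_control_system_carrier: "g \<in> carrier G \<Longrightarrow> v \<in> U \<Longrightarrow> f g v \<in> carrier G"
  and linear_control_system_hom: "(\<lambda>g. f g 0) \<in> hom G G"
  and linear_control_system_bij: "bij_betw (\<lambda>g. f g 0) (carrier G) (carrier G)"
  and linear_control_system_eq_mult: "g \<in> carrier G \<Longrightarrow> v \<in> U \<Longrightarrow> f g v = f \<one> v \<otimes> f g 0"
  using lcs unfolding linear_control_system_def by blast+

lemma funpow_f0_carrier: "g \<in> carrier G \<Longrightarrow> ((\<lambda>g. f g 0) ^^ k) g \<in> carrier G"
  by (induction k) (simp_all add: linear_control_system_carrier linear_control_system_zero_mem)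

lemma phi_carrier: "g \<in> carrier G \<Longrightarrow> (\<And>i. u i \<in> U) \<Longrightarrow> phi f k g u \<in> carrier G"
  by (induction k) (simp_all add: linear_control_system_carrier)

lemma phi_eq_phi_one_mult_funpow:
  assumes g: "g \<in> carrier G" and u: "\<And>i. u i \<in> U"
  shows "phi f k g u = phi f k \<one> u \<otimes> ((\<lambda>g. f g 0) ^^ k) g"
proof (induction k)
  case 0
  show ?case using g by simp
next
  case (Suc k)
  let ?F = "\<lambda>g. f g 0"
  have phi_one: "phi f k \<one> u \<in> carrier G" and iter: "(?F ^^ k) g \<in> carrier G"
    using phi_carrier[OF _ u] funpow_f0_carrier[OF g] by auto
  have "phi f (Suc k) g u = f \<one> (u k) \<otimes> ?F (phi f k g u)"
    using linear_control_system_eq_mult[OF phi_carrier[OF g u] u[of k]] by simp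
  also have "\<dots> = f \<one> (u k) \<otimes> ?F (phi f k \<one> u \<otimes> (?F ^^ k) g)"
    using Suc by simp
  also have "\<dots> = f \<one> (u k) \<otimes> (?F (phi f k \<one> u) \<otimes> (?F ^^ Suc k) g)"
    using hom_mult[OF linear_control_system_hom phi_one iter] by simp
  also have "\<dots> = (f \<one> (u k) \<otimes> ?F (phi f k \<one> u)) \<otimes> (?F ^^ Suc k) g"
    using linear_control_system_carrier[OF phi_one linear_control_system_zero_mem] linear_control_system_carrier[OF iter linear_control_system_zero_mem]
      linear_control_system_carrier[OF one_closed u[of k]]
    by (simp add: m_assoc)
  also have "f \<one> (u k) \<otimes> ?F (phi f k \<one> u) = phi f (Suc k) \<one> u"
    using linear_control_system_eq_mult[OF phi_one u[of k]] by simp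
  finally show ?case .
qed

lemma phi_one_mult_funpow_reachable:
  assumes v: "\<And>i. v i \<in> U" and y: "y \<in> reachable G U f"
  shows "phi f l \<one> v \<otimes> ((\<lambda>g. f g 0) ^^ l) y \<in> reachable G U f"
proof -
  obtain k u where y_eq: "y = phi f k \<one> u" and k: "k \<ge> 1" and u: "\<And>i. u i \<in> U"
    using y by (auto simp: reachable_def)
  define w where "w = (\<lambda>i. if i < k then u i else v (i - k))"
  have w: "\<And>i. w i \<in> U" using u v by (simp add: w_def)
  have "phi f (k + l) \<one> w = phi f l (phi f k \<one> w) (\<lambda>i. w (k + i))"
    by (rule phi_add)
  also have "phi f k \<one> w = y"
    unfolding y_eq by (rule phi_cong) (simp add: w_def)
  also have "(\<lambda>i. w (k + i)) = v"
    by (simp add: w_def)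
  also have "phi f l y v = phi f l \<one> v \<otimes> ((\<lambda>g. f g 0) ^^ l) y"
    unfolding y_eq by (rule phi_eq_phi_one_mult_funpow[OF phi_carrier[OF one_closed u] v])
  finally show ?thesis
    using k w unfolding reachable_def by (intro CollectI exI[of _ "k + l"] exI[of _ w]) simp
qed

lemma reachable_mult_invariant_subset:
  assumes B_reach: "B \<subseteq> reachable G U f" and B_carrier: "B \<subseteq> carrier G"
    and B_inv: "inv_into (carrier G) (\<lambda>g. f g 0) ` B \<subseteq> B"
    and x: "x \<in> reachable G U f" and b: "b \<in> B"
  shows "x \<otimes> b \<in> reachable G U f"
proof -
  let ?F = "\<lambda>g. f g 0"
  obtain l v where x_eq: "x = phi f l \<one> v" and v: "\<And>i. v i \<in> U"
    using x by (auto simp: reachable_def)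
  have pre_b: "(inv_into (carrier G) ?F ^^ l) b \<in> B"
    using b B_inv by (induction l) auto
  then have "phi f l \<one> v \<otimes> (?F ^^ l) ((inv_into (carrier G) ?F ^^ l) b) \<in> reachable G U f"
    using B_reach by (intro phi_one_mult_funpow_reachable[of v] v) auto
  moreover have "(?F ^^ l) ((inv_into (carrier G) ?F ^^ l) b) = b"
    using linear_control_system_bij b B_carrier by (intro funpow_inv_into_right_inverse) auto
  ultimately show ?thesis
    using x_eq by simp
qed

end

theorem corollary2p17:
  fixes G :: "('g, 'b) monoid_scheme" and T :: "'g topology"
    and U :: "(real ^ 'm) set" and f :: "'g \<Rightarrow> real ^ 'm \<Rightarrow> 'g"
    and H :: "'g set" and TH :: "'g topology" and B :: "'g set"
  assumes "lie_group G T" and "connected_space T"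
    and "compact U" and "0 \<in> interior U"
    and "linear_control_system G T U f"
    and "lie_subgroup H TH G T" and "connected_space TH"
    and "\<exists>V. openin TH V \<and> \<one>\<^bsub>G\<^esub> \<in> V \<and> V \<subseteq> B"
    and "B \<subseteq> H \<inter> reachable G U f"
    and "(\<lambda>g. f g 0) ` B \<subseteq> B"
    and "inv_into (carrier G) (\<lambda>g. f g 0) ` B \<subseteq> B"
  shows "(\<lambda>g. f g 0) ` H \<subseteq> H \<and> H \<subseteq> reachable G U f"
proof -
  obtain V where V: "openin TH V" "\<one>\<^bsub>G\<^esub> \<in> V" "V \<subseteq> B"
    using assms(8) by blast
  have grp: "group G" using assms(1) by (simp add: lie_group_def)
  have sub: "subgroup H G" and lie_H: "lie_group (G\<lparr>carrier := H\<rparr>) TH"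
    using assms(6) by (auto simp: lie_subgroup_def)
  have H_eq: "H = semigroup_generate G V"
    using connected_semigroup_generate_eq_carrier[OF lie_group_imp_topological_group[OF lie_H]
        V(1) _ assms(7)] V(2)
    by (simp add: semigroup_generate_carrier_update)
  have "(\<lambda>g. f g 0) ` semigroup_generate G V \<subseteq> H"
    using V(3) assms(9,10) subgroup.subset[OF sub]
    by (intro group.hom_image_semigroup_generate_subset[OF grp
          linear_control_system_hom[OF assms(5) grp] sub]) auto
  moreover have "semigroup_generate G V \<subseteq> reachable G U f"
    using V(3) assms(9,11) subgroup.subset[OF sub]
      reachable_mult_invariant_subset[OF assms(5) grp, of B]
    by (intro semigroup_generate_minimal) auto
  ultimately show ?thesis
    using H_eq by auto
qed

end
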